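(* Let $\mu$ be a non-trivial continuous (atomless) positive measure on $\mathbb T$, singular with respect to Lebesgue measure, supported by a closed set $E\subset\mathbb T$ of finite entropy. Then for any $\varepsilon,\delta>0$ there exists an arc $I$ such that $0<\mu(I)<\delta$ and $\operatorname{Ent}_I(E)/\mu(I)<\varepsilon$.
   Context: $m$ is normalized Lebesgue measure on $\mathbb T$, and $|J|=m(J)$ for an arc $J$. A closed set $E\subset\mathbb T$ with $m(E)=0$ has finite entropy if $\sum_\ell |I_\ell|\log\frac1{|I_\ell|}<\infty$, where $\mathbb T\setminus E=\bigsqcup_\ell I_\ell$ with disjoint open arcs $I_\ell$ (equivalently $\int_{\mathbb T}\log\operatorname{dist}(\zeta,E)\,dm(\zeta)>-\infty$). For an arc $I$, the local entropy is $\operatorname{Ent}_I(E)=\sum_\ell |I_\ell|\log\frac{1}{|I_\ell|}$, where $I_\ell$ are the disjoint open arcs with $I\setminus E=\bigsqcup_\ell I_\ell$. *)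

theory Defs
  imports "HOL-Analysis.Analysis"
begin

definition circle :: "complex set" where
  "circle = sphere 0 1"

definition nmeas :: "complex set \<Rightarrow> real" where
  "nmeas A = measure lebesgue {t \<in> {0..<2*pi}. cis t \<in> A} / (2*pi)"

definition open_arc :: "real \<Rightarrow> real \<Rightarrow> complex set" where
  "open_arc a l = {cis t | t. a < t \<and> t < a + l}"

definition local_entropy :: "complex set \<Rightarrow> complex set \<Rightarrow> ennreal" where
  "local_entropy I E =
     (\<Sum>\<^sub>\<infinity> C \<in> components (I - E). ennreal (nmeas C * ln (1 / nmeas C)))"

definition finite_entropy :: "complex set \<Rightarrow> bool" where
  "finite_entropy E \<longleftrightarrow> closed E \<and> E \<subseteq> circle \<and> nmeas E = 0
      \<and> local_entropy circle E < \<infinity>"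

end

theory Submission
  imports Defs "HOL-Probability.Probability"
begin

(* Cut the circle at the quantiles of the angular distribution of mu into N arcs of mass
  mu(T)/N each, and shrink every arc to the smallest closed arc containing its part of E; no
  mass is lost since mu lives on E and has no atoms. Since the endpoints now lie in E, every
  component of I_k - E is a component of T - E, and distinct arcs have distinct components.
  Finite entropy lets us pick finitely many components F outside of which the entropy sum is
  below eps mu(T)/2. At most |F| arcs contain a component from F; for N > 2|F| the remaining
  more than N/2 arcs therefore cannot all have Ent_I(E) >= eps mu(T)/N = eps mu(I). Large N
  also gives mu(I) < delta. *)

section \<open>Arcs of the circle\<close>

lemma borel_measurable_Arg: "Arg \<in> borel_measurable borel"
proof -
  have Arg_eq: "Arg = (\<lambda>z. if z \<in> -\<real>\<^sub>\<le>\<^sub>0 then Arg z else if z = 0 then 0 else pi)"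
    by (auto simp: fun_eq_iff Arg_real complex_nonpos_Reals_iff complex_is_Real_iff complex_eq_iff)
  have "{z::complex \<in> space borel. z \<in> -\<real>\<^sub>\<le>\<^sub>0} \<in> sets borel"
    using borel_open[OF open_Compl[OF closed_nonpos_Reals_complex]] by (simp add: Compl_eq)
  moreover have "Arg \<in> borel_measurable (restrict_space borel {z. z \<in> -\<real>\<^sub>\<le>\<^sub>0})"
    by (intro borel_measurable_continuous_on_restrict) (simp add: Compl_eq[symmetric] continuous_on_Arg)
  moreover have "(\<lambda>z::complex. if z = 0 then 0 else pi) \<in> borel_measurable (restrict_space borel {z. z \<notin> -\<real>\<^sub>\<le>\<^sub>0})"
    by (intro measurable_restrict_space1) measurable
  ultimately show ?thesis
    by (subst Arg_eq) (simp add: measurable_If_restrict_space_iff)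
qed

lemma Arg_vimage_Int_circle: "Arg -` A \<inter> circle = cis ` (A \<inter> {-pi<..pi})"
proof (intro equalityI subsetI)
  fix z assume z: "z \<in> Arg -` A \<inter> circle"
  then have "cmod z = 1" by (simp add: circle_def)
  then have "cis (Arg z) = z" using cis_Arg[of z] sgn_div_norm[of z] by fastforce
  with z Arg_bounded[of z] show "z \<in> cis ` (A \<inter> {-pi<..pi})"
    by (intro image_eqI[of _ _ "Arg z"]) auto
qed (auto simp: Arg_cis circle_def)

lemma open_arc_eq_image: "open_arc a l = cis ` {a<..<a+l}"
  by (auto simp: open_arc_def)

lemma open_arc_subset_circle: "open_arc a l \<subseteq> circle"
  by (auto simp: open_arc_def circle_def)

lemma disjoint_open_arcs:
  assumes "-pi \<le> a" "0 < l" "a + l \<le> b" "0 < l'" "b + l' \<le> pi"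
  shows "open_arc a l \<inter> open_arc b l' = {}"
proof -
  have "inj_on cis {-pi<..pi}" by (metis Arg_cis inj_on_inverseI)
  then show ?thesis
    using assms unfolding open_arc_eq_image
    by (subst inj_on_image_Int[symmetric]) auto
qed

lemma inner_cis_cis: "inner (cis c) (cis t) = cos (t - c)"
  by (simp add: inner_complex_def cos_diff)

lemma
  assumes l: "0 < l" "l < 2*pi" and z: "z \<in> circle"
  shows open_arc_iff_inner_gt: "z \<in> open_arc a l \<longleftrightarrow> inner (cis (a + l/2)) z > cos (l/2)"
    and inner_eq_cos_imp_endpoint:
      "inner (cis (a + l/2)) z = cos (l/2) \<Longrightarrow> z = cis a \<or> z = cis (a+l)"
proof -
  define c where "c = a + l/2"
  define s where "s = Arg (z * cis (-c))"
  have "z \<noteq> 0" using z by (auto simp: circle_def)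
  then have "cis s = z * cis (-c)"
    using z by (simp add: s_def cis_Arg sgn_div_norm norm_mult circle_def)
  then have "cis (s + c) = z * (cis (-c) * cis c)" by (simp add: mult.assoc flip: cis_mult)
  then have zs: "z = cis (s + c)" by (simp add: cis_mult)
  have s: "- pi < s" "s \<le> pi" using Arg_bounded s_def by auto
  have inz: "inner (cis c) z = cos \<bar>s\<bar>" by (simp add: zs inner_cis_cis)
  have h: "0 < l/2" "l/2 < pi" using l by auto
  show "z \<in> open_arc a l \<longleftrightarrow> inner (cis (a + l/2)) z > cos (l/2)"
  proof
    assume "z \<in> open_arc a l"
    then obtain t where t: "a < t" "t < a + l" "z = cis t" by (auto simp: open_arc_def)
    then have "\<bar>t - c\<bar> < l/2" unfolding c_def abs_less_iff by linarith
    then have "cos (l/2) < cos \<bar>t - c\<bar>" using h by (subst cos_mono_less_eq) auto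
    then show "inner (cis (a + l/2)) z > cos (l/2)"
      using t by (simp add: inner_cis_cis c_def[symmetric])
  next
    assume "inner (cis (a + l/2)) z > cos (l/2)"
    then have "cos (l/2) < cos \<bar>s\<bar>" using inz by (simp add: c_def)
    then have "\<bar>s\<bar> < l/2" using h s by (subst (asm) cos_mono_less_eq) auto
    then show "z \<in> open_arc a l" using zs unfolding open_arc_def c_def
      by (intro CollectI exI[of _ "s + (a + l/2)"]) auto
  qed
  assume "inner (cis (a + l/2)) z = cos (l/2)"
  then have "cos \<bar>s\<bar> = cos (l/2)" using inz by (simp add: c_def)
  moreover have "\<bar>s\<bar> \<le> pi" using s by auto
  ultimately have "\<bar>s\<bar> = l/2" using h by (intro cos_inj_pi[OF abs_ge_zero]) auto
  then have "s + c = a \<or> s + c = a + l" by (auto simp: c_def)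
  then show "z = cis a \<or> z = cis (a+l)" using zs by auto
qed

lemma components_open_arc_Diff:
  assumes E: "E \<subseteq> circle" and l: "0 < l" "l < 2*pi"
    and ends: "cis a \<in> E" "cis (a+l) \<in> E"
    and C: "C \<in> components (open_arc a l - E)"
  shows "C \<in> components (circle - E)"
  unfolding in_components_maximal
proof (intro conjI allI impI)
  show C_ne: "C \<noteq> {}" and "connected C" and C_sub: "C \<subseteq> circle - E"
    using in_components_nonempty[OF C] in_components_connected[OF C]
      in_components_subset[OF C] open_arc_subset_circle by auto
  fix D assume D: "D \<noteq> {} \<and> C \<subseteq> D \<and> D \<subseteq> circle - E \<and> connected D"
  have "D \<subseteq> open_arc a l"
  proof (rule ccontr)
    assume "\<not> D \<subseteq> open_arc a l"
    then obtain y where y: "y \<in> D" "y \<notin> open_arc a l" by auto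
    obtain x where x: "x \<in> C" using C_ne by auto
    then have "x \<in> open_arc a l" using in_components_subset[OF C] by auto
    then have "inner (cis (a + l/2)) x > cos (l/2)"
      using open_arc_iff_inner_gt[OF l] x C_sub by auto
    moreover have "inner (cis (a + l/2)) y \<le> cos (l/2)"
      using open_arc_iff_inner_gt[OF l] y D by auto
    ultimately obtain z where "z \<in> D" "inner (cis (a + l/2)) z = cos (l/2)"
      using connected_ivt_hyperplane[of D y x "cis (a + l/2)" "cos (l/2)"] D x y by auto
    then show False using inner_eq_cos_imp_endpoint[OF l] D ends by blast
  qed
  then show "D = C" using C D unfolding in_components_maximal by blast
qed

lemma disjoint_family_on_components_Diff:
  assumes "disjoint_family_on A K"
  shows "disjoint_family_on (\<lambda>k. components (A k - E)) K"
  unfolding disjoint_family_on_def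
proof (intro ballI impI)
  fix i k assume "i \<in> K" "k \<in> K" "i \<noteq> k"
  then have "A i \<inter> A k = {}" using assms by (auto simp: disjoint_family_on_def)
  then show "components (A i - E) \<inter> components (A k - E) = {}"
    using in_components_nonempty in_components_subset by fastforce
qed

section \<open>Entropy of disjoint arcs with endpoints in E\<close>

definition component_entropy :: "complex set \<Rightarrow> ennreal" where
  "component_entropy C = ennreal (nmeas C * ln (1 / nmeas C))"

lemma local_entropy_eq_infsum:
  "local_entropy I E = (\<Sum>\<^sub>\<infinity>C \<in> components (I - E). component_entropy C)"
  by (simp add: local_entropy_def component_entropy_def)

lemma ennreal_summable_on [simp]: "(f :: 'a \<Rightarrow> ennreal) summable_on A"
  by (rule nonneg_summable_on_complete) simp

lemma ennreal_infsum_tail_less: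
  fixes f :: "'a \<Rightarrow> ennreal"
  assumes fin: "infsum f A < \<top>" and \<eta>: "0 < \<eta>"
  obtains F where "finite F" "F \<subseteq> A" "infsum f (A - F) < \<eta>"
proof (cases "infsum f A < \<eta>")
  case True
  then show ?thesis by (intro that[of "{}"]) auto
next
  case False
  define S where "S = infsum f A"
  have "\<eta> \<le> S" "S < \<top>" using False fin by (auto simp: S_def)
  then have minus_less: "S - \<eta> < c \<longleftrightarrow> S < c + \<eta>" for c
    by (intro minus_less_iff_ennreal) auto
  have "S + 0 < S + \<eta>" using \<open>S < \<top>\<close> \<eta> by (subst ennreal_add_left_cancel_less) auto
  then have "S - \<eta> < S" using minus_less[of S] by simp
  moreover have "(sum f \<longlongrightarrow> S) (finite_subsets_at_top A)"
    using has_sum_infsum[of f A] by (simp add: S_def has_sum_def)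
  ultimately have "\<forall>\<^sub>F F in finite_subsets_at_top A. S - \<eta> < sum f F"
    by (rule order_tendstoD(1)[rotated])
  then obtain F where F: "finite F" "F \<subseteq> A" "S - \<eta> < sum f F"
    unfolding eventually_finite_subsets_at_top by auto
  have "S = sum f F + infsum f (A - F)"
    using F infsum_Un_disjoint[of f F "A - F"] by (simp add: S_def Un_absorb1)
  moreover have "S < sum f F + \<eta>" using F(3) minus_less by simp
  ultimately have "infsum f (A - F) < \<eta>"
    by (simp add: ennreal_add_left_cancel_less)
  then show ?thesis using F that by blast
qed

lemma card_meeting_disjoint_family_le:
  assumes "finite F" and disj: "disjoint_family_on S K"
  shows "card {k \<in> K. S k \<inter> F \<noteq> {}} \<le> card F"
proof -
  let ?B = "{k \<in> K. S k \<inter> F \<noteq> {}}"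
  have "\<forall>k\<in>?B. \<exists>x. x \<in> S k \<inter> F" by blast
  from bchoice[OF this] obtain g where g: "\<forall>k\<in>?B. g k \<in> S k \<inter> F" ..
  have "inj_on g ?B"
  proof (rule inj_onI)
    fix i k assume "i \<in> ?B" "k \<in> ?B" "g i = g k"
    then have "S i \<inter> S k \<noteq> {}" using g by (metis IntD1 empty_iff IntI)
    then show "i = k" using disj \<open>i \<in> ?B\<close> \<open>k \<in> ?B\<close> by (auto simp: disjoint_family_on_def)
  qed
  moreover have "g ` ?B \<subseteq> F" using g by blast
  ultimately show ?thesis using card_inj_on_le \<open>finite F\<close> by blast
qed

lemma sum_local_entropy_open_arcs_le:
  assumes E: "E \<subseteq> circle" and "finite K"
    and disj: "disjoint_family_on (\<lambda>k. open_arc (a k) (l k)) K"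
    and arcs: "\<And>k. k \<in> K \<Longrightarrow> 0 < l k \<and> l k < 2*pi \<and> cis (a k) \<in> E \<and> cis (a k + l k) \<in> E"
    and avoid: "\<And>k. k \<in> K \<Longrightarrow> components (open_arc (a k) (l k) - E) \<inter> F = {}"
  shows "(\<Sum>k\<in>K. local_entropy (open_arc (a k) (l k)) E)
           \<le> (\<Sum>\<^sub>\<infinity>C \<in> components (circle - E) - F. component_entropy C)"
proof -
  let ?C = "\<lambda>k. components (open_arc (a k) (l k) - E)"
  have "(\<Sum>k\<in>K. local_entropy (open_arc (a k) (l k)) E) = infsum component_entropy (\<Union>k\<in>K. ?C k)"
    unfolding local_entropy_eq_infsum
    using disjoint_family_on_components_Diff[OF disj]
    by (intro sum_infsum[OF \<open>finite K\<close>]) (auto simp: disjoint_family_on_def)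
  also have "\<dots> \<le> infsum component_entropy (components (circle - E) - F)"
  proof -
    have "(\<Union>k\<in>K. ?C k) \<subseteq> components (circle - E) - F"
      using components_open_arc_Diff[OF E] arcs avoid by blast
    then show ?thesis by (intro infsum_mono_neutral) auto
  qed
  finally show ?thesis .
qed

lemma exists_open_arc_entropy_less:
  assumes E: "E \<subseteq> circle"
    and disj: "disjoint_family_on (\<lambda>k. open_arc (a k) (l k)) {..<N}"
    and arcs: "\<And>k. k < N \<Longrightarrow> 0 < l k \<and> l k < 2*pi \<and> cis (a k) \<in> E \<and> cis (a k + l k) \<in> E"
    and F: "finite F" "2 * card F < N"
    and tail: "(\<Sum>\<^sub>\<infinity>C \<in> components (circle - E) - F. component_entropy C) < ennreal (r * N / 2)"
  shows "\<exists>k<N. local_entropy (open_arc (a k) (l k)) E < ennreal r"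
proof (rule ccontr)
  assume "\<not> ?thesis"
  then have big: "ennreal r \<le> local_entropy (open_arc (a k) (l k)) E" if "k < N" for k
    using that by (meson leD not_less)
  let ?C = "\<lambda>k. components (open_arc (a k) (l k) - E)"
  define B where "B = {k \<in> {..<N}. ?C k \<inter> F \<noteq> {}}"
  define G where "G = {..<N} - B"
  have "card B \<le> card F"
    using disjoint_family_on_components_Diff[OF disj]
    unfolding B_def by (rule card_meeting_disjoint_family_le[OF F(1)])
  moreover have "card G = N - card B"
    unfolding G_def by (subst card_Diff_subset) (auto simp: B_def)
  ultimately have "N \<le> 2 * card G" using F(2) by linarith
  moreover have "0 < r"
    using tail by (cases "0 < r") (auto simp: ennreal_neg mult_nonpos_nonneg)
  ultimately have "ennreal (r * N / 2) \<le> ennreal (card G * r)"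
    by (intro ennreal_leI) (simp add: field_simps flip: of_nat_le_iff)
  also have "\<dots> = (\<Sum>k\<in>G. ennreal r)"
    using \<open>0 < r\<close> by (simp add: ennreal_mult ennreal_of_nat_eq_real_of_nat)
  also have "\<dots> \<le> (\<Sum>k\<in>G. local_entropy (open_arc (a k) (l k)) E)"
    using big by (intro sum_mono) (auto simp: G_def)
  also have "\<dots> \<le> (\<Sum>\<^sub>\<infinity>C \<in> components (circle - E) - F. component_entropy C)"
    using disj arcs by (intro sum_local_entropy_open_arcs_le[OF E])
      (auto simp: G_def B_def disjoint_family_on_def)
  finally show False using tail by simp
qed

section \<open>The angular distribution of an atomless measure on the circle\<close>

locale supported_atomless_measure =
  fixes mu :: "complex measure" and E :: "complex set"
  assumes sets_mu: "sets mu = sets borel"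
    and finite_mu: "finite_measure mu"
    and atomless: "\<And>x. emeasure mu {x} = 0"
    and closed_E: "closed E" and E_subset_circle: "E \<subseteq> circle"
    and supported: "emeasure mu (UNIV - E) = 0"
begin

sublocale finite_measure mu by (rule finite_mu)

lemma measure_Int_support: "X \<in> sets borel \<Longrightarrow> measure mu (X \<inter> E) = measure mu X"
proof -
  assume X: "X \<in> sets borel"
  have "UNIV - E \<in> null_sets mu" using supported closed_E sets_mu by (auto simp: null_sets_def)
  moreover have "X \<inter> E = X - (UNIV - E)" by auto
  ultimately show ?thesis using measure_Diff_null_set[of X mu] X sets_mu by simp
qed

text \<open>Pushing mu forward under Arg turns arcs inside (-pi, pi] into intervals, and turns the
  atomlessness of mu into continuity of the distribution function.\<close>
definition angle_distr :: "real measure" where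
  "angle_distr = distr mu borel Arg"

lemma measurable_Arg_mu: "Arg \<in> borel_measurable mu"
  using borel_measurable_Arg measurable_cong_sets[OF sets_mu refl] by blast

sublocale angle: finite_borel_measure angle_distr
proof -
  have "finite_measure angle_distr"
    unfolding angle_distr_def by (rule finite_measure_distr[OF measurable_Arg_mu])
  then show "finite_borel_measure angle_distr"
    by (simp add: finite_borel_measure_def finite_borel_measure_axioms_def angle_distr_def)
qed

lemma measure_angle_distr:
  assumes "A \<in> sets borel" shows "measure angle_distr A = measure mu (Arg -` A \<inter> E)"
proof -
  have "Arg -` A \<in> sets borel" using measurable_sets[OF borel_measurable_Arg assms] by simp
  then show ?thesis
    using measure_distr[OF measurable_Arg_mu, of A] assms sets_eq_imp_space_eq[OF sets_mu]
    by (simp add: angle_distr_def measure_Int_support)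
qed

lemma measure_angle_distr_eq_0:
  assumes A: "A \<in> sets borel" and fin: "finite (A \<inter> {-pi<..pi} \<inter> cis -` E)"
  shows "measure angle_distr A = 0"
proof -
  have "Arg -` A \<inter> E = (Arg -` A \<inter> circle) \<inter> E" using E_subset_circle by auto
  also have "\<dots> = cis ` (A \<inter> {-pi<..pi}) \<inter> E" by (simp only: Arg_vimage_Int_circle)
  also have "\<dots> = cis ` (A \<inter> {-pi<..pi} \<inter> cis -` E)" by blast
  finally have "finite (Arg -` A \<inter> E)" using fin by (simp only: finite_imageI)
  then have "emeasure mu (Arg -` A \<inter> E) = (\<Sum>x \<in> Arg -` A \<inter> E. emeasure mu {x})"
    using sets_mu by (intro emeasure_eq_sum_singleton) auto
  then have "measure mu (Arg -` A \<inter> E) = 0" using atomless by (simp add: measure_def)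
  then show ?thesis using measure_angle_distr[OF A] by simp
qed

lemma measure_open_arc:
  assumes "-pi \<le> a" "a + l \<le> pi"
  shows "measure mu (open_arc a l) = measure angle_distr {a<..<a+l}"
proof -
  let ?I = "{a<..<a+l}"
  have "open_arc a l = Arg -` ?I \<inter> circle"
    using assms by (simp add: Arg_vimage_Int_circle open_arc_eq_image Int_absorb2 subset_eq)
  moreover have "Arg -` ?I \<inter> circle \<in> sets borel"
    using measurable_sets[OF borel_measurable_Arg, of ?I] by (simp add: circle_def)
  ultimately have "measure mu (open_arc a l) = measure mu (Arg -` ?I \<inter> circle \<inter> E)"
    by (simp only: measure_Int_support)
  also have "Arg -` ?I \<inter> circle \<inter> E = Arg -` ?I \<inter> E"
    using E_subset_circle by auto
  finally show ?thesis by (simp add: measure_angle_distr)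
qed

lemma isCont_cdf_angle_distr: "isCont (cdf angle_distr) t"
  by (simp add: angle.isCont_cdf measure_angle_distr_eq_0)

lemma measure_angle_distr_Ioo:
  assumes "a \<le> b" shows "measure angle_distr {a<..<b} = cdf angle_distr b - cdf angle_distr a"
proof (cases "a = b")
  case False
  then have "{a<..b} = {a<..<b} \<union> {b}" using assms by auto
  moreover have "{b} \<in> null_sets angle_distr"
    by (simp add: null_sets_def angle.emeasure_eq_measure measure_angle_distr_eq_0 angle.M_is_borel)
  ultimately have "measure angle_distr {a<..b} = measure angle_distr {a<..<b}"
    using measure_Un_null_set[of "{a<..<b}" angle_distr "{b}"] by (simp add: angle.M_is_borel)
  then show ?thesis using angle.cdf_diff_eq[of a b] assms False by simp
qed simp

lemma cdf_angle_distr_minus_pi: "cdf angle_distr (-pi) = 0"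
proof -
  have "{..-pi} \<inter> {-pi<..pi} = {}" by auto
  then show ?thesis by (simp add: cdf_def measure_angle_distr_eq_0)
qed

lemma cdf_angle_distr_pi: "cdf angle_distr pi = measure mu UNIV"
proof -
  have "Arg -` {..pi} = UNIV" using Arg_bounded by auto
  then show ?thesis using measure_Int_support[of UNIV] by (simp add: cdf_def measure_angle_distr)
qed

lemma exists_subinterval_with_ends_in_support:
  assumes pq: "p < q" and pos: "0 < measure angle_distr {p<..<q}"
  obtains \<alpha> \<beta> where "p \<le> \<alpha>" "\<alpha> < \<beta>" "\<beta> \<le> q" "cis \<alpha> \<in> E" "cis \<beta> \<in> E"
    "measure angle_distr {\<alpha><..<\<beta>} = measure angle_distr {p<..<q}"
proof -
  define K where "K = {p..q} \<inter> cis -` E"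
  have "isCont cis t" for t
    using continuous_on_cis[OF continuous_on_id, of UNIV] by (simp add: continuous_on_eq_continuous_at)
  then have "closed K"
    unfolding K_def by (intro closed_Int closed_atLeastAtMost continuous_closed_vimage closed_E)
  have "K \<noteq> {}"
  proof
    assume "K = {}"
    moreover have "{p<..<q} \<inter> {-pi<..pi} \<inter> cis -` E \<subseteq> K" by (auto simp: K_def)
    ultimately have "{p<..<q} \<inter> {-pi<..pi} \<inter> cis -` E = {}" by blast
    then show False using pos measure_angle_distr_eq_0[of "{p<..<q}"] by simp
  qed
  define \<alpha> where "\<alpha> = Inf K"
  define \<beta> where "\<beta> = Sup K"
  have bdd: "bdd_below K" "bdd_above K" by (auto simp: K_def intro: bdd_belowI2 bdd_aboveI2)
  have "\<alpha> \<in> K" "\<beta> \<in> K"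
    using closed_contains_Inf closed_contains_Sup \<open>K \<noteq> {}\<close> bdd \<open>closed K\<close>
    by (auto simp: \<alpha>_def \<beta>_def)
  have K_between: "\<alpha> \<le> t \<and> t \<le> \<beta>" if "t \<in> K" for t
    using that bdd by (auto simp: \<alpha>_def \<beta>_def intro: cInf_lower cSup_upper)
  define D where "D = {p<..<q} - {\<alpha><..<\<beta>}"
  have "D \<inter> {-pi<..pi} \<inter> cis -` E \<subseteq> {\<alpha>, \<beta>}"
  proof
    fix t assume t: "t \<in> D \<inter> {-pi<..pi} \<inter> cis -` E"
    then have "t \<in> K" by (auto simp: D_def K_def)
    with t show "t \<in> {\<alpha>, \<beta>}" using K_between[of t] by (auto simp: D_def)
  qed
  then have "measure angle_distr D = 0"
    by (intro measure_angle_distr_eq_0) (auto simp: D_def intro: finite_subset)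
  moreover have "{p<..<q} = {\<alpha><..<\<beta>} \<union> D" "{\<alpha><..<\<beta>} \<inter> D = {}"
    using \<open>\<alpha> \<in> K\<close> \<open>\<beta> \<in> K\<close> by (auto simp: D_def K_def)
  moreover have "D \<in> sets angle_distr" by (simp add: D_def angle.M_is_borel)
  ultimately have eq: "measure angle_distr {\<alpha><..<\<beta>} = measure angle_distr {p<..<q}"
    using angle.finite_measure_Union[of "{\<alpha><..<\<beta>}" D] by (simp add: angle.M_is_borel)
  then have "\<alpha> < \<beta>" using pos by (cases "\<alpha> < \<beta>") auto
  with eq \<open>\<alpha> \<in> K\<close> \<open>\<beta> \<in> K\<close> show ?thesis by (intro that[of \<alpha> \<beta>]) (auto simp: K_def)
qed

lemma exists_equal_mass_partition:
  assumes "0 < N"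
  obtains t where "\<And>k. k \<le> N \<Longrightarrow> -pi \<le> t k \<and> t k \<le> pi \<and>
    cdf angle_distr (t k) = real k * measure mu UNIV / real N"
proof -
  have "\<exists>x. -pi \<le> x \<and> x \<le> pi \<and> cdf angle_distr x = real k * measure mu UNIV / real N"
    if "k \<le> N" for k
  proof (rule IVT)
    have "real k / real N \<le> 1" using that assms by simp
    then show "real k * measure mu UNIV / real N \<le> cdf angle_distr pi"
      using mult_left_le_one_le[of "measure mu UNIV" "real k / real N"]
      by (simp add: cdf_angle_distr_pi)
  qed (auto simp: cdf_angle_distr_minus_pi isCont_cdf_angle_distr)
  then have "\<forall>k. \<exists>x. k \<le> N \<longrightarrow>
      -pi \<le> x \<and> x \<le> pi \<and> cdf angle_distr x = real k * measure mu UNIV / real N"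
    by blast
  then show ?thesis using that by metis
qed

lemma exists_equal_mass_intervals:
  assumes N: "0 < N" and M: "0 < measure mu UNIV"
  obtains \<alpha> \<beta> where
    "\<And>k. k < N \<Longrightarrow> -pi \<le> \<alpha> k \<and> \<alpha> k < \<beta> k \<and> \<beta> k \<le> pi \<and> cis (\<alpha> k) \<in> E \<and> cis (\<beta> k) \<in> E \<and>
       measure angle_distr {\<alpha> k<..<\<beta> k} = measure mu UNIV / real N"
    and "\<And>i k. i < k \<Longrightarrow> k < N \<Longrightarrow> \<beta> i \<le> \<alpha> k"
proof -
  define M where "M = measure mu UNIV"
  obtain t where t: "\<And>k. k \<le> N \<Longrightarrow> -pi \<le> t k \<and> t k \<le> pi \<and>
      cdf angle_distr (t k) = real k * M / real N"
    using exists_equal_mass_partition[OF N] by (auto simp: M_def)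
  have t_mono: "t i \<le> t k" if "i \<le> k" "k \<le> N" for i k
  proof (rule ccontr)
    assume "\<not> t i \<le> t k"
    then have "real k * M / real N \<le> real i * M / real N"
      using angle.cdf_nondecreasing[of "t k" "t i"] t that by simp
    then have "i = k" using that M N by (simp add: divide_le_cancel M_def)
    then show False using \<open>\<not> t i \<le> t k\<close> by simp
  qed
  have "\<exists>\<alpha> \<beta>. t k \<le> \<alpha> \<and> \<alpha> < \<beta> \<and> \<beta> \<le> t (Suc k) \<and> cis \<alpha> \<in> E \<and> cis \<beta> \<in> E \<and>
      measure angle_distr {\<alpha><..<\<beta>} = M / real N" if "k < N" for k
  proof -
    have piece: "measure angle_distr {t k<..<t (Suc k)} = M / real N"
      using t[of k] t[of "Suc k"] t_mono[of k "Suc k"] that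
      by (simp add: measure_angle_distr_Ioo field_simps)
    then have "0 < measure angle_distr {t k<..<t (Suc k)}" using M N by (simp add: M_def)
    moreover from this have "t k < t (Suc k)" by (cases "t k < t (Suc k)") auto
    ultimately show ?thesis
      using exists_subinterval_with_ends_in_support piece by metis
  qed
  then obtain \<alpha> \<beta> where ab: "\<And>k. k < N \<Longrightarrow> t k \<le> \<alpha> k \<and> \<alpha> k < \<beta> k \<and> \<beta> k \<le> t (Suc k) \<and>
      cis (\<alpha> k) \<in> E \<and> cis (\<beta> k) \<in> E \<and> measure angle_distr {\<alpha> k<..<\<beta> k} = M / real N"
    by metis
  show ?thesis
  proof (rule that)
    fix k assume "k < N"
    moreover have "-pi \<le> t k" "t (Suc k) \<le> pi" using t[of k] t[of "Suc k"] \<open>k < N\<close> by auto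
    ultimately show "-pi \<le> \<alpha> k \<and> \<alpha> k < \<beta> k \<and> \<beta> k \<le> pi \<and> cis (\<alpha> k) \<in> E \<and> cis (\<beta> k) \<in> E \<and>
       measure angle_distr {\<alpha> k<..<\<beta> k} = measure mu UNIV / real N"
      using ab[of k] by (auto simp: M_def)
  next
    fix i k assume "i < k" "k < N"
    then have "\<beta> i \<le> t (Suc i)" "t (Suc i) \<le> t k" "t k \<le> \<alpha> k"
      using ab[of i] ab[of k] t_mono[of "Suc i" k] by auto
    then show "\<beta> i \<le> \<alpha> k" by linarith
  qed
qed

lemma exists_disjoint_equal_mass_arcs:
  assumes N: "2 \<le> N" and M: "0 < measure mu UNIV"
  obtains a l where "disjoint_family_on (\<lambda>k. open_arc (a k) (l k)) {..<N}"
    and "\<And>k. k < N \<Longrightarrow> 0 < l k \<and> l k < 2*pi \<and> cis (a k) \<in> E \<and> cis (a k + l k) \<in> E \<and>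
           measure mu (open_arc (a k) (l k)) = measure mu UNIV / real N"
proof -
  obtain \<alpha> \<beta> where ab: "\<And>k. k < N \<Longrightarrow> -pi \<le> \<alpha> k \<and> \<alpha> k < \<beta> k \<and> \<beta> k \<le> pi \<and>
       cis (\<alpha> k) \<in> E \<and> cis (\<beta> k) \<in> E \<and> measure angle_distr {\<alpha> k<..<\<beta> k} = measure mu UNIV / real N"
    and ordered: "\<And>i k. i < k \<Longrightarrow> k < N \<Longrightarrow> \<beta> i \<le> \<alpha> k"
    using exists_equal_mass_intervals[of N] N M by auto
  have disjoint: "open_arc (\<alpha> i) (\<beta> i - \<alpha> i) \<inter> open_arc (\<alpha> k) (\<beta> k - \<alpha> k) = {}"
    if "i < k" "k < N" for i k
    using ab[of i] ab[of k] ordered[OF that] that by (intro disjoint_open_arcs) auto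
  show ?thesis
  proof (rule that[of \<alpha> "\<lambda>k. \<beta> k - \<alpha> k"])
    show "disjoint_family_on (\<lambda>k. open_arc (\<alpha> k) (\<beta> k - \<alpha> k)) {..<N}"
      unfolding disjoint_family_on_def
      using disjoint by (metis Int_commute lessThan_iff linorder_neqE_nat)
    fix k assume k: "k < N"
    have "\<beta> k - \<alpha> k < 2*pi" \<comment> \<open>an arc of length 2 pi would carry the full mass\<close>
    proof (rule ccontr)
      assume "\<not> \<beta> k - \<alpha> k < 2*pi"
      then have "\<alpha> k = -pi" "\<beta> k = pi" using ab[OF k] by auto
      then have "measure mu UNIV / real N = measure mu UNIV"
        using ab[OF k] by (simp add: measure_angle_distr_Ioo cdf_angle_distr_pi cdf_angle_distr_minus_pi)
      then show False using M N by (simp add: divide_eq_eq)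
    qed
    then show "0 < \<beta> k - \<alpha> k \<and> \<beta> k - \<alpha> k < 2*pi \<and> cis (\<alpha> k) \<in> E \<and>
        cis (\<alpha> k + (\<beta> k - \<alpha> k)) \<in> E \<and>
        measure mu (open_arc (\<alpha> k) (\<beta> k - \<alpha> k)) = measure mu UNIV / real N"
      using ab[OF k] by (simp add: measure_open_arc)
  qed
qed

lemma exists_arc_with_small_entropy_ratio:
  assumes ent: "local_entropy circle E < \<top>" and M: "0 < measure mu UNIV"
    and \<epsilon>: "0 < \<epsilon>" and \<delta>: "0 < \<delta>"
  shows "\<exists>a l. 0 < l \<and> l < 2 * pi \<and>
           0 < measure mu (open_arc a l) \<and> measure mu (open_arc a l) < \<delta> \<and>
           local_entropy (open_arc a l) E < ennreal (\<epsilon> * measure mu (open_arc a l))"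
proof -
  define M where "M = measure mu UNIV"
  have "(\<Sum>\<^sub>\<infinity>C \<in> components (circle - E). component_entropy C) < \<top>"
    using ent by (simp add: local_entropy_eq_infsum)
  moreover have "0 < ennreal (\<epsilon> * M / 2)" using M \<epsilon> by (simp add: M_def)
  ultimately obtain F where F: "finite F"
    "(\<Sum>\<^sub>\<infinity>C \<in> components (circle - E) - F. component_entropy C) < ennreal (\<epsilon> * M / 2)"
    by (metis ennreal_infsum_tail_less)
  obtain n :: nat where n: "M / \<delta> < n" using reals_Archimedean2 by blast
  define N where "N = n + 2 * card F + 2"
  have N: "2 \<le> N" "2 * card F < N" by (auto simp: N_def)
  have "M / \<delta> < N" using n by (simp add: N_def)
  then have small: "M / N < \<delta>" using \<delta> N(1) by (simp add: pos_divide_less_eq mult.commute)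
  obtain a l where disj: "disjoint_family_on (\<lambda>k. open_arc (a k) (l k)) {..<N}"
    and arcs: "\<And>k. k < N \<Longrightarrow> 0 < l k \<and> l k < 2*pi \<and> cis (a k) \<in> E \<and> cis (a k + l k) \<in> E \<and>
           measure mu (open_arc (a k) (l k)) = M / real N"
    using exists_disjoint_equal_mass_arcs[OF N(1) M] unfolding M_def by blast
  have "(\<Sum>\<^sub>\<infinity>C \<in> components (circle - E) - F. component_entropy C) < ennreal ((\<epsilon> * (M / N)) * N / 2)"
    using F(2) N by simp
  then obtain k where "k < N" "local_entropy (open_arc (a k) (l k)) E < ennreal (\<epsilon> * (M / N))"
    using exists_open_arc_entropy_less[OF E_subset_circle disj _ F(1) N(2)] arcs by blast
  moreover have "0 < M / N" using M N(1) by (simp add: M_def)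
  ultimately have "0 < l k \<and> l k < 2 * pi \<and>
      0 < measure mu (open_arc (a k) (l k)) \<and> measure mu (open_arc (a k) (l k)) < \<delta> \<and>
      local_entropy (open_arc (a k) (l k)) E < ennreal (\<epsilon> * measure mu (open_arc (a k) (l k)))"
    using arcs[of k] small by (simp add: M_def)
  then show ?thesis by (rule exI[of _ "a k", OF exI[of _ "l k"]])
qed

end

theorem lemma2p2:
  fixes \<mu> :: "complex measure" and E :: "complex set" and \<epsilon> \<delta> :: real
  assumes sets_mu: "sets \<mu> = sets borel"
    and finite: "finite_measure \<mu>"
    and nontrivial: "emeasure \<mu> UNIV > 0"
    and atomless: "\<And>x. emeasure \<mu> {x} = 0"
    and singular: "\<exists>A \<in> sets borel. nmeas A = 0 \<and> emeasure \<mu> (UNIV - A) = 0"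
    and supp: "emeasure \<mu> (UNIV - E) = 0"
    and entE: "finite_entropy E"
    and eps: "\<epsilon> > 0" and del: "\<delta> > 0"
  shows "\<exists>a l. 0 < l \<and> l < 2 * pi \<and>
           0 < measure \<mu> (open_arc a l) \<and> measure \<mu> (open_arc a l) < \<delta> \<and>
           local_entropy (open_arc a l) E < ennreal (\<epsilon> * measure \<mu> (open_arc a l))"
proof -
  have E: "closed E" "E \<subseteq> circle" "local_entropy circle E < \<top>"
    using entE by (auto simp: finite_entropy_def)
  interpret supported_atomless_measure \<mu> E
    using sets_mu finite atomless E(1,2) supp by (rule supported_atomless_measure.intro)
  have "0 < measure \<mu> UNIV"
    using nontrivial by (simp add: emeasure_eq_measure)
  then show ?thesis by (rule exists_arc_with_small_entropy_ratio[OF E(3) _ eps del])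
qed

end
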